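(* Let $p$ be a prime greater than $3$. Then $$\sum_{k=0}^{[p/3]}\frac{(3k)!}{27^k\,k!^3}\equiv\Big(\frac p3\Big)\pmod p.$$
   Context: $[y]$ is the greatest integer not exceeding $y$; $\big(\frac p3\big)$ is the Legendre symbol. *)

theory Defs
  imports "HOL-Number_Theory.Number_Theory"
begin

text \<open>Congruence of rationals modulo an integer m: r - s, written in lowest terms a/b,
  has denominator b coprime to m and numerator a divisible by m
  (i.e. r - s lies in m times the localisation of Z away from m).\<close>
definition rat_cong :: "rat \<Rightarrow> rat \<Rightarrow> int \<Rightarrow> bool" where
  "rat_cong r s m = (case quotient_of (r - s) of (a, b) \<Rightarrow> coprime b m \<and> m dvd a)"

end

theory Submission
  imports Defs
begin

text \<open>Write \<open>p = 3N + r\<close> with \<open>r \<in> {1, 2}\<close>. Modulo \<open>p\<close> we have \<open>3N \<equiv> -r\<close>, hence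
  \<open>(3k+1)(3k+2)(3k+3) \<equiv> 27 (k+1)(N-k)(-N-1-k)\<close>, and by induction
  \<open>(3k)!/(27^k k!^3) \<equiv> binom(N,k) binom(-N-1,k)\<close> for \<open>k < p\<close>. By Vandermonde's identity
  these products sum to \<open>binom(-1,N) = (-1)^N\<close>, and \<open>(-1)^N = (p/3)\<close> because \<open>p\<close> is odd.\<close>

definition local_multiple :: "int \<Rightarrow> rat \<Rightarrow> bool" where
  "local_multiple m x \<longleftrightarrow> (\<exists>a b. b \<noteq> 0 \<and> coprime b m \<and> x = of_int (m * a) / of_int b)"

lemma local_multiple_imp_rat_cong:
  assumes "local_multiple m (r - s)"
  shows "rat_cong r s m"
proof -
  obtain a b where ab: "b \<noteq> 0" "coprime b m" "r - s = of_int (m * a) / of_int b"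
    using assms unfolding local_multiple_def by blast
  obtain c d where q: "quotient_of (r - s) = (c, d)" by (cases "quotient_of (r - s)")
  have "d > 0" "coprime c d" "r - s = of_int c / of_int d"
    using quotient_of_denom_pos[OF q] quotient_of_coprime[OF q] quotient_of_div[OF q] by auto
  with ab have "c * b = m * a * d"
    by (simp add: frac_eq_eq flip: of_int_mult of_int_eq_iff)
  then have "d dvd c * b" and "m dvd c * b" by simp_all
  with \<open>coprime c d\<close> ab(2) have "coprime d m" and "m dvd c"
    by (metis coprime_commute coprime_dvd_mult_right_iff coprime_divisors dvd_refl,
        metis coprime_commute coprime_dvd_mult_left_iff)
  with q show ?thesis unfolding rat_cong_def by simp
qed

lemma local_multiple_zero: "local_multiple m 0"
  unfolding local_multiple_def by (rule exI[of _ 0], rule exI[of _ 1]) simp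

lemma local_multiple_add:
  assumes "local_multiple m x" "local_multiple m y"
  shows "local_multiple m (x + y)"
proof -
  obtain a b where ab: "b \<noteq> 0" "coprime b m" "x = of_int (m * a) / of_int b"
    using assms(1) unfolding local_multiple_def by blast
  obtain c d where cd: "d \<noteq> 0" "coprime d m" "y = of_int (m * c) / of_int d"
    using assms(2) unfolding local_multiple_def by blast
  have "x + y = of_int (m * (a * d + c * b)) / of_int (b * d)"
    using ab cd by (simp add: field_simps)
  moreover have "b * d \<noteq> 0" "coprime (b * d) m" using ab cd by auto
  ultimately show ?thesis unfolding local_multiple_def by blast
qed

lemma local_multiple_sum:
  "(\<And>k. k \<in> A \<Longrightarrow> local_multiple m (f k)) \<Longrightarrow> local_multiple m (\<Sum>k\<in>A. f k)"
  by (induction A rule: infinite_finite_induct) (simp_all add: local_multiple_zero local_multiple_add)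

lemma local_multiple_of_cong:
  assumes "[a = b] (mod m)" "d \<noteq> 0" "coprime d m"
  shows "local_multiple m (of_int a / of_int d - of_int b / of_int d)"
proof -
  obtain c where "a - b = m * c"
    using assms(1) by (metis cong_iff_dvd_diff dvdE)
  then have "of_int a / of_int d - of_int b / of_int d = (of_int (m * c) / of_int d :: rat)"
    by (simp add: diff_divide_distrib [symmetric] flip: of_int_diff)
  with assms(2,3) show ?thesis unfolding local_multiple_def by blast
qed

lemma gbinomial_Vandermonde_of_nat:
  "(\<Sum>k = 0..n. (of_nat m gchoose k) * (b gchoose (n - k))) = (of_nat m + b) gchoose n"
proof (induction m arbitrary: n)
  case 0
  show ?case by (simp add: gbinomial_0_left sum.atLeast_Suc_atMost[of 0] sum.neutral)
next
  case (Suc m)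
  show ?case
  proof (cases n)
    case 0
    then show ?thesis by simp
  next
    case (Suc n')
    let ?M = "of_nat m :: 'a"
    have shift: "(\<Sum>k = 0..Suc n'. (a gchoose k) * (b gchoose (Suc n' - k)))
        = (b gchoose Suc n') + (\<Sum>k = 0..n'. (a gchoose Suc k) * (b gchoose (n' - k)))" for a :: 'a
      by (subst sum.atLeast0_atMost_Suc_shift) simp
    have "(\<Sum>k = 0..Suc n'. ((?M + 1) gchoose k) * (b gchoose (Suc n' - k)))
        = (\<Sum>k = 0..n'. (?M gchoose k) * (b gchoose (n' - k)))
          + (\<Sum>k = 0..Suc n'. (?M gchoose k) * (b gchoose (Suc n' - k)))"
      by (simp only: shift gbinomial_Suc_Suc distrib_right sum.distrib) (simp add: algebra_simps)
    also have "\<dots> = (?M + b + 1) gchoose Suc n'"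
      by (simp only: Suc.IH gbinomial_Suc_Suc)
    finally show ?thesis by (simp add: Suc algebra_simps)
  qed
qed

lemma sum_gchoose_mult_gchoose_neg:
  "(\<Sum>k = 0..N. ((of_nat N :: 'a :: field_char_0) gchoose k) * ((- of_nat N - 1) gchoose k))
     = (-1) ^ N"
proof -
  have "(\<Sum>k = 0..N. ((of_nat N :: 'a) gchoose k) * ((- of_nat N - 1) gchoose k))
      = (\<Sum>k = 0..N. (of_nat N gchoose (N - k)) * ((- of_nat N - 1) gchoose (N - (N - k))))"
    by (intro sum.cong refl) (simp add: gbinomial_of_nat_symmetric[symmetric])
  also have "\<dots> = (\<Sum>k = 0..N. (of_nat N gchoose k) * ((- of_nat N - 1) gchoose (N - k)))"
    by (rule sum.reindex_bij_witness[of _ "\<lambda>k. N - k" "\<lambda>k. N - k"]) auto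
  also have "\<dots> = (-1) gchoose N"
    by (simp add: gbinomial_Vandermonde_of_nat)
  also have "\<dots> = (-1) ^ N"
    using gbinomial_minus[of "1 :: 'a" N] by (simp add: binomial_gbinomial[symmetric])
  finally show ?thesis .
qed

lemma of_int_prod_eq_fact_gchoose:
  "(of_int (\<Prod>i<k. (int N - int i) * (- int N - 1 - int i)) :: 'a :: field_char_0)
     = fact k ^ 2 * ((of_nat N gchoose k) * ((- of_nat N - 1) gchoose k))"
proof -
  have "(of_int (\<Prod>i<k. (int N - int i) * (- int N - 1 - int i)) :: 'a)
      = (\<Prod>i = 0..<k. of_nat N - of_nat i) * (\<Prod>i = 0..<k. (- of_nat N - 1) - of_nat i)"
    by (simp add: prod.distrib atLeast0LessThan)
  also have "\<dots> = (fact k * (of_nat N gchoose k)) * (fact k * ((- of_nat N - 1) gchoose k))"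
    by (simp only: gbinomial_mult_fact)
  finally show ?thesis by (simp add: algebra_simps power2_eq_square)
qed

lemma fact_three_mult_cong:
  fixes P :: int
  assumes "P = 3 * int N + r" "r = 1 \<or> r = 2"
  shows "[fact (3 * k) = 27 ^ k * fact k * (\<Prod>i<k. (int N - int i) * (- int N - 1 - int i))] (mod P)"
proof (induction k)
  case 0
  show ?case by simp
next
  case (Suc k)
  have step: "[(3 * int k + 1) * (3 * int k + 2) * (3 * int k + 3)
                = 27 * (int k + 1) * ((int N - int k) * (- int N - 1 - int k))] (mod P)"
  proof -
    have "(3 * int k + 1) * (3 * int k + 2) * (3 * int k + 3)
          - 27 * (int k + 1) * ((int N - int k) * (- int N - 1 - int k))
        = P * (3 * (int k + 1) * (3 * int N + 3 - r))"
      using assms by (auto simp: algebra_simps)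
    then show ?thesis by (simp add: cong_iff_dvd_diff)
  qed
  have "(fact (3 * Suc k) :: int) = fact (3 * k) * ((3 * int k + 1) * (3 * int k + 2) * (3 * int k + 3))"
    by (simp add: numeral_3_eq_3 algebra_simps)
  also have "[\<dots> = (27 ^ k * fact k * (\<Prod>i<k. (int N - int i) * (- int N - 1 - int i)))
                  * (27 * (int k + 1) * ((int N - int k) * (- int N - 1 - int k)))] (mod P)"
    by (rule cong_mult[OF Suc.IH step])
  also have "(27 ^ k * fact k * (\<Prod>i<k. (int N - int i) * (- int N - 1 - int i)))
                  * (27 * (int k + 1) * ((int N - int k) * (- int N - 1 - int k)))
      = 27 ^ Suc k * fact (Suc k) * (\<Prod>i<Suc k. (int N - int i) * (- int N - 1 - int i))"
    by (simp add: algebra_simps)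
  finally show ?case .
qed

lemma fact_ratio_cong_gchoose:
  assumes "prime p" "p = 3 * N + r" "r = 1 \<or> r = 2" "k < p"
  shows "local_multiple (int p) (of_nat (fact (3 * k)) / (27 ^ k * (of_nat (fact k)) ^ 3)
           - (of_nat N gchoose k) * ((- of_nat N - 1) gchoose k))"
proof -
  define d :: int where "d = 27 ^ k * fact k ^ 3"
  let ?e = "\<Prod>i<k. (int N - int i) * (- int N - 1 - int i)"
  have "int p \<noteq> 3" using assms(2,3) by presburger
  then have "coprime (3 :: int) (int p)"
    using assms(1) by (intro primes_coprime) auto
  then have "coprime (27 :: int) (int p)"
    using coprime_power_left_iff[of 3 3 "int p"] by simp
  moreover have "coprime (fact k :: int) (int p)"
    using assms(1,4) prime_dvd_fact_iff[OF assms(1)]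
    by (metis coprime_commute of_nat_fact coprime_int_iff prime_imp_coprime not_less)
  ultimately have "coprime d (int p)"
    unfolding d_def by simp
  moreover have "[fact (3 * k) = 27 ^ k * fact k * ?e] (mod int p)"
    using fact_three_mult_cong[of "int p" N "int r" k] assms(2,3) by auto
  ultimately have "local_multiple (int p)
      (of_int (fact (3 * k)) / of_int d - of_int (27 ^ k * fact k * ?e) / of_int d)"
    by (intro local_multiple_of_cong) (auto simp: d_def)
  moreover have "of_int (fact (3 * k)) / of_int d
      = (of_nat (fact (3 * k)) / (27 ^ k * (of_nat (fact k)) ^ 3) :: rat)"
    by (simp add: d_def)
  moreover have "of_int (27 ^ k * fact k * ?e) / of_int d
      = (27 ^ k * fact k * (fact k ^ 2 * ((of_nat N gchoose k) * ((- of_nat N - 1) gchoose k))))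
          / (27 ^ k * fact k ^ 3 :: rat)"
    by (simp only: d_def of_int_mult of_int_power of_int_numeral of_int_fact
        of_int_prod_eq_fact_gchoose)
  moreover have "\<dots> = (of_nat N gchoose k) * ((- of_nat N - 1) gchoose k)"
    by (simp add: power2_eq_square power3_eq_cube)
  ultimately show ?thesis by simp
qed

lemma QuadRes_3_iff: "QuadRes 3 a \<longleftrightarrow> a mod 3 \<noteq> 2"
proof
  assume "QuadRes 3 a"
  then obtain y :: int where "y\<^sup>2 mod 3 = a mod 3"
    unfolding QuadRes_def cong_def by blast
  moreover have "y\<^sup>2 mod 3 = (y mod 3)\<^sup>2 mod 3" by (simp add: power_mod)
  moreover have "y mod 3 \<in> {0, 1, 2}" by auto
  ultimately show "a mod 3 \<noteq> 2" by auto
next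
  assume "a mod 3 \<noteq> 2"
  then have "a mod 3 = 0 \<or> a mod 3 = 1" by auto
  then show "QuadRes 3 a"
    unfolding QuadRes_def cong_def by (intro exI[of _ "a mod 3"]) auto
qed

lemma Legendre_3:
  "Legendre a 3 = (if a mod 3 = 0 then 0 else if a mod 3 = 1 then 1 else -1)"
  using QuadRes_3_iff[of a] by (auto simp: Legendre_def cong_def)

lemma prime_gt_3_mod_3:
  fixes p :: nat
  assumes "prime p" "p > 3"
  shows "p mod 3 = 1 \<or> p mod 3 = 2"
proof -
  have "\<not> 3 dvd p"
  proof
    assume "3 dvd p"
    with assms(1) have "3 = p" by (intro primes_dvd_imp_eq) simp_all
    with assms(2) show False by simp
  qed
  then show ?thesis by presburger
qed

lemma Legendre_prime_3:
  fixes p :: nat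
  assumes "prime p" "p > 3"
  shows "Legendre (int p) 3 = (-1) ^ (p div 3)"
proof -
  have "odd p" using prime_odd_nat[OF assms(1)] assms(2) by simp
  consider "p mod 3 = 1" | "p mod 3 = 2" using prime_gt_3_mod_3[OF assms] by blast
  then show ?thesis
  proof cases
    case 1
    with \<open>odd p\<close> have "int p mod 3 = 1" "even (p div 3)" by presburger+
    then show ?thesis by (simp add: Legendre_3)
  next
    case 2
    with \<open>odd p\<close> have "int p mod 3 = 2" "odd (p div 3)" by presburger+
    then show ?thesis by (simp add: Legendre_3)
  qed
qed

theorem corollary2p2:
  fixes p :: nat
  assumes "prime p" and "p > 3"
  shows "rat_cong
           (\<Sum>k = 0..p div 3. of_nat (fact (3 * k)) / (27 ^ k * (of_nat (fact k)) ^ 3))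
           (of_int (Legendre (int p) 3)) (int p)"
proof -
  define N where "N = p div 3"
  have p: "p = 3 * N + p mod 3" "p mod 3 = 1 \<or> p mod 3 = 2"
    using prime_gt_3_mod_3[OF assms] by (simp_all add: N_def)
  have "N < p" using assms(2) by (simp add: N_def)
  then have "local_multiple (int p)
      (\<Sum>k = 0..N. of_nat (fact (3 * k)) / (27 ^ k * (of_nat (fact k)) ^ 3)
                    - (of_nat N gchoose k) * ((- of_nat N - 1) gchoose k))"
    by (intro local_multiple_sum fact_ratio_cong_gchoose[OF assms(1) p]) auto
  then have "local_multiple (int p)
      ((\<Sum>k = 0..N. of_nat (fact (3 * k)) / (27 ^ k * (of_nat (fact k)) ^ 3)) - (-1) ^ N)"
    by (simp add: sum_subtractf sum_gchoose_mult_gchoose_neg)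
  then show ?thesis
    using local_multiple_imp_rat_cong by (simp add: Legendre_prime_3[OF assms] N_def)
qed

end
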